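(* If $p = p(n)$ satisfies $p^2 n \log n \leqslant 16/\mathrm{e}^5$, then $\mathbb{P}\big(\langle G_{n,p}\rangle_{K_4} = K_n\big) \to 0$ as $n \to \infty$.
   Context: $\mathrm{e}$ is Euler's number. The $K_4$-bootstrap process on $K_n$ starting from $G \subset E(K_n)$: $G_0 = G$, $G_{t+1} = G_t \cup \{f \in E(K_n) : f \text{ is the only edge of some copy of } K_4 \text{ in } K_n \text{ not in } G_t\}$; $\langle G\rangle_{K_4} = \bigcup_t G_t$. $G_{n,p}$ is the Erdős–Rényi random graph on $[n]$. *)

theory Defs
  imports Complex_Main
begin

definition Kn_edges :: "nat \<Rightarrow> nat set set" where
  "Kn_edges n = {e. e \<subseteq> {1..n} \<and> card e = 2}"

definition clique_edges :: "nat set \<Rightarrow> nat set set" where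
  "clique_edges S = {e. e \<subseteq> S \<and> card e = 2}"

definition K4_step :: "nat \<Rightarrow> nat set set \<Rightarrow> nat set set" where
  "K4_step n G = G \<union> {f \<in> Kn_edges n. \<exists>S. S \<subseteq> {1..n} \<and> card S = 4 \<and>
                         clique_edges S - G = {f}}"

definition K4_closure :: "nat \<Rightarrow> nat set set \<Rightarrow> nat set set" where
  "K4_closure n G = (\<Union>t. (K4_step n ^^ t) G)"

definition gnp_prob :: "nat \<Rightarrow> real \<Rightarrow> (nat set set \<Rightarrow> bool) \<Rightarrow> real" where
  "gnp_prob n p P = (\<Sum>G\<in>{G. G \<subseteq> Kn_edges n \<and> P G}.
        p ^ card G * (1 - p) ^ (card (Kn_edges n) - card G))"

end

theory Submission
  imports Defs "HOL-Library.Disjoint_Sets" "HOL-Real_Asymp.Real_Asymp"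
begin

text \<open>
  Cover the edges of G by clusters: vertex sets S, each carrying its own set of at least 2|S| - 3
  edges of G inside S. Two clusters sharing two vertices, or three clusters meeting pairwise in
  three distinct vertices, can be merged without losing this density. For a cover that admits
  no further merge, the pairs lying inside some cluster form a set closed under the K4-process,
  and since every cluster is smaller than L \<le> n this set is not all of K_n. So if G
  percolates, some merge must produce a set S with L \<le> |S| < 3L spanning at least 2|S| - 3
  edges of G. For L = \<lceil>27/20 ln n\<rceil> the expected number of such sets is
  O((ln n)^3 n^(-1/100)) when p^2 n ln n \<le> 16/e^5.
\<close>

section \<open>The K4-process and linear triangle-free families\<close>

lemma finite_clique_edges: "finite S \<Longrightarrow> finite (clique_edges S)"
  unfolding clique_edges_def by (rule finite_subset[of _ "Pow S"]) auto

lemma clique_edges_mono: "S \<subseteq> T \<Longrightarrow> clique_edges S \<subseteq> clique_edges T"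
  unfolding clique_edges_def by auto

lemma card_clique_edges: "finite S \<Longrightarrow> card (clique_edges S) = card S choose 2"
  unfolding clique_edges_def by (rule n_subsets)

lemma Kn_edges_eq_clique_edges: "Kn_edges n = clique_edges {1..n}"
  unfolding Kn_edges_def clique_edges_def ..

lemma finite_Kn_edges: "finite (Kn_edges n)"
  by (simp add: Kn_edges_eq_clique_edges finite_clique_edges)

lemma doubleton_in_clique_edges: "a \<in> S \<Longrightarrow> b \<in> S \<Longrightarrow> a \<noteq> b \<Longrightarrow> {a, b} \<in> clique_edges S"
  unfolding clique_edges_def by simp

lemma K4_closure_subset:
  assumes "G \<subseteq> H"
    and closed: "\<And>S f. S \<subseteq> {1..n} \<Longrightarrow> card S = 4 \<Longrightarrow> f \<in> clique_edges S \<Longrightarrow>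
                   clique_edges S - {f} \<subseteq> H \<Longrightarrow> f \<in> H"
  shows "K4_closure n G \<subseteq> H"
proof -
  have "(K4_step n ^^ t) G \<subseteq> H" for t
  proof (induction t)
    case 0
    then show ?case using assms(1) by simp
  next
    case (Suc t)
    show ?case
    proof
      fix f assume "f \<in> (K4_step n ^^ Suc t) G"
      then consider "f \<in> (K4_step n ^^ t) G"
        | S where "S \<subseteq> {1..n}" "card S = 4" "clique_edges S - (K4_step n ^^ t) G = {f}"
        unfolding K4_step_def by auto
      then show "f \<in> H"
      proof cases
        case 2
        then show ?thesis
          using Suc.IH by (intro closed[of S]) auto
      qed (use Suc.IH in auto)
    qed
  qed
  then show ?thesis
    unfolding K4_closure_def by blast
qed

definition linear_triangle_free :: "'a set set \<Rightarrow> bool" where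
  "linear_triangle_free \<S> \<longleftrightarrow>
     (\<forall>A\<in>\<S>. \<forall>B\<in>\<S>. \<forall>x y. x \<noteq> y \<longrightarrow> {x, y} \<subseteq> A \<inter> B \<longrightarrow> A = B) \<and>
     (\<forall>A\<in>\<S>. \<forall>B\<in>\<S>. \<forall>C\<in>\<S>. \<forall>x y z. distinct [x, y, z] \<longrightarrow>
        x \<in> A \<inter> B \<longrightarrow> y \<in> B \<inter> C \<longrightarrow> z \<in> A \<inter> C \<longrightarrow> A = B \<or> B = C \<or> A = C)"

lemma linear_triangle_free_eq:
  assumes "linear_triangle_free \<S>" "A \<in> \<S>" "B \<in> \<S>" "x \<noteq> y" "{x, y} \<subseteq> A \<inter> B"
  shows "A = B"
  using assms unfolding linear_triangle_free_def by meson

lemma linear_triangle_free_cases: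
  assumes "linear_triangle_free \<S>" "A \<in> \<S>" "B \<in> \<S>" "C \<in> \<S>" "distinct [x, y, z]"
    "x \<in> A \<inter> B" "y \<in> B \<inter> C" "z \<in> A \<inter> C"
  shows "A = B \<or> B = C \<or> A = C"
  using assms unfolding linear_triangle_free_def by meson

lemma linear_triangle_free_triangle:
  assumes "linear_triangle_free \<S>" "distinct [u, x, y]"
    and "\<exists>A\<in>\<S>. {u, x} \<subseteq> A" "\<exists>B\<in>\<S>. {u, y} \<subseteq> B" "\<exists>C\<in>\<S>. {x, y} \<subseteq> C"
  shows "\<exists>A\<in>\<S>. {u, x, y} \<subseteq> A"
proof -
  obtain A B C where ABC: "A \<in> \<S>" "{u, x} \<subseteq> A" "B \<in> \<S>" "{u, y} \<subseteq> B" "C \<in> \<S>" "{x, y} \<subseteq> C"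
    using assms(3-5) by meson
  have "distinct [u, y, x]"
    using assms(2) by auto
  then consider "A = B" | "B = C" | "A = C"
    using linear_triangle_free_cases[OF assms(1) ABC(1,3,5)] ABC by auto
  then show ?thesis
    by cases (use ABC in blast)+
qed

lemma linear_triangle_free_K4:
  assumes ltf: "linear_triangle_free \<S>" and S: "card S = 4" and f: "f \<in> clique_edges S"
    and covered: "\<And>e. e \<in> clique_edges S - {f} \<Longrightarrow> \<exists>A\<in>\<S>. e \<subseteq> A"
  shows "\<exists>A\<in>\<S>. f \<subseteq> A"
proof -
  obtain u w where uw: "f = {u, w}" "u \<noteq> w" "f \<subseteq> S"
    using f unfolding clique_edges_def card_2_iff by blast
  have "card (S - f) = 2"
    using S uw by (simp add: card_Diff_subset card_ge_0_finite finite_subset)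
  then obtain x y where xy: "S - f = {x, y}" "x \<noteq> y"
    unfolding card_2_iff by blast
  have edge: "\<exists>A\<in>\<S>. {a, b} \<subseteq> A" if "a \<in> S - f \<or> b \<in> S - f" "{a, b} \<subseteq> S" "a \<noteq> b" for a b
  proof (rule covered)
    show "{a, b} \<in> clique_edges S - {f}"
      using that doubleton_in_clique_edges[of a S b] by auto
  qed
  have distinct: "distinct [u, x, y]" "distinct [w, x, y]"
    using uw xy by auto
  have in_S: "x \<in> S - f" "y \<in> S - f" "{u, w, x, y} \<subseteq> S"
    using uw xy by auto
  have "\<exists>A\<in>\<S>. {u, x, y} \<subseteq> A"
    using linear_triangle_free_triangle[OF ltf distinct(1)] edge[of u x] edge[of u y] edge[of x y]
      in_S distinct(1) by simp
  then obtain A where A: "A \<in> \<S>" "{u, x, y} \<subseteq> A" ..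
  have "\<exists>B\<in>\<S>. {w, x, y} \<subseteq> B"
    using linear_triangle_free_triangle[OF ltf distinct(2)] edge[of w x] edge[of w y] edge[of x y]
      in_S distinct(2) by simp
  then obtain B where B: "B \<in> \<S>" "{w, x, y} \<subseteq> B" ..
  have "A = B"
    using linear_triangle_free_eq[OF ltf A(1) B(1) xy(2)] A B by simp
  then have "f \<subseteq> A"
    using A B uw by simp
  then show ?thesis
    using A(1) ..
qed

lemma linear_triangle_free_clique:
  assumes ltf: "linear_triangle_free \<S>" and ab: "a \<in> V" "b \<in> V" "a \<noteq> b"
    and covered: "\<And>e. e \<in> clique_edges V \<Longrightarrow> \<exists>A\<in>\<S>. e \<subseteq> A"
  shows "\<exists>A\<in>\<S>. V \<subseteq> A"
proof -
  have edge: "\<exists>A\<in>\<S>. {c, d} \<subseteq> A" if "c \<in> V" "d \<in> V" "c \<noteq> d" for c d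
    using covered doubleton_in_clique_edges that by meson
  obtain A where A: "A \<in> \<S>" "{a, b} \<subseteq> A"
    using edge ab by meson
  have "w \<in> A" if "w \<in> V" for w
  proof (cases "w = a \<or> w = b")
    case False
    then have "\<exists>B\<in>\<S>. {w, a, b} \<subseteq> B"
      using linear_triangle_free_triangle[OF ltf _ edge edge edge] ab \<open>w \<in> V\<close> by simp
    then obtain B where B: "B \<in> \<S>" "{w, a, b} \<subseteq> B" ..
    then have "A = B"
      using linear_triangle_free_eq[OF ltf A(1) B(1) ab(3)] A by simp
    then show ?thesis
      using B by simp
  qed (use A in auto)
  then show ?thesis
    using A(1) by blast
qed

section \<open>Clusters\<close>

text \<open>
  F certifies that S spans at least 2|S| - 3 edges of G. In a cover the certificates are
  pairwise disjoint, so they add up when clusters are merged.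
\<close>

definition cluster :: "nat \<Rightarrow> nat \<Rightarrow> nat set set \<Rightarrow> nat set \<Rightarrow> nat set set \<Rightarrow> bool" where
  "cluster n L G S F \<longleftrightarrow>
     S \<subseteq> {1..n} \<and> 2 \<le> card S \<and> card S < L \<and> F \<subseteq> G \<inter> clique_edges S \<and> 2 * card S \<le> card F + 3"

definition cluster_cover :: "nat \<Rightarrow> nat \<Rightarrow> nat set set \<Rightarrow> (nat set \<times> nat set set) set \<Rightarrow> bool" where
  "cluster_cover n L G C \<longleftrightarrow>
     finite C \<and> (\<forall>P\<in>C. cluster n L G (fst P) (snd P)) \<and> disjoint_family_on snd C \<and>
     (\<forall>e\<in>G. \<exists>P\<in>C. e \<subseteq> fst P)"

lemma cluster_finite: "cluster n L G S F \<Longrightarrow> finite S \<and> finite F"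
  unfolding cluster_def
  by (meson finite_atLeastAtMost finite_clique_edges finite_subset le_inf_iff)

lemma cluster_cover_edges:
  assumes "G \<subseteq> Kn_edges n" "3 \<le> L"
  shows "cluster_cover n L G ((\<lambda>e. (e, {e})) ` G)"
proof -
  have "finite G"
    using assms(1) finite_Kn_edges by (rule finite_subset)
  moreover have "cluster n L G e {e}" if "e \<in> G" for e
    using that assms unfolding cluster_def Kn_edges_def clique_edges_def by auto
  moreover have "disjoint_family_on snd ((\<lambda>e. (e, {e})) ` G)"
    unfolding disjoint_family_on_def by auto
  ultimately show ?thesis
    unfolding cluster_cover_def by auto
qed

lemma card_Un_triangle:
  assumes "finite A" "finite B" "finite C" "distinct [x, y, z]"
    and "x \<in> A \<inter> B" "y \<in> B \<inter> C" "z \<in> A \<inter> C"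
  shows "card (A \<union> B \<union> C) + 3 \<le> card A + card B + card C"
proof -
  have "card {x} \<le> card (A \<inter> B)"
    using assms by (intro card_mono) auto
  moreover have "card {y, z} \<le> card ((A \<union> B) \<inter> C)"
    using assms by (intro card_mono) auto
  ultimately show ?thesis
    using card_Un_Int[of A B] card_Un_Int[of "A \<union> B" C] assms(1-4) by simp
qed

text \<open>
  The deficit condition holds for two clusters sharing two vertices and for three clusters
  meeting pairwise in three distinct vertices.
\<close>

lemma card_Union_clusters:
  assumes cl: "\<And>P. P \<in> D \<Longrightarrow> cluster n L G (fst P) (snd P)"
    and D: "finite D" "D \<noteq> {}" "disjoint_family_on snd D"
    and deficit: "2 * card (\<Union>(fst ` D)) + 3 * card D \<le> 2 * (\<Sum>P\<in>D. card (fst P)) + 3"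
  shows "card (\<Union>(fst ` D)) < card D * L"
    and "2 * card (\<Union>(fst ` D)) \<le> card (\<Union>(snd ` D)) + 3"
proof -
  have "card (\<Union>(fst ` D)) \<le> (\<Sum>P\<in>D. card (fst P))"
    using card_UN_le[OF D(1)] by simp
  also have "\<dots> < (\<Sum>P\<in>D. L)"
    using cl D(1,2) by (intro sum_strict_mono) (auto simp: cluster_def)
  finally show "card (\<Union>(fst ` D)) < card D * L"
    by simp
  have finite: "finite (snd P)" if "P \<in> D" for P
    using cluster_finite[OF cl[OF that]] ..
  have "(\<Sum>P\<in>D. 2 * card (fst P)) \<le> (\<Sum>P\<in>D. card (snd P) + 3)"
    using cl by (intro sum_mono) (simp add: cluster_def)
  also have "\<dots> = card (\<Union>(snd ` D)) + 3 * card D"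
    using card_UN_disjoint'[OF D(3) finite D(1)] by (simp add: sum.distrib)
  finally show "2 * card (\<Union>(fst ` D)) \<le> card (\<Union>(snd ` D)) + 3"
    using deficit by (simp add: sum_distrib_left)
qed

lemma cluster_cover_replace:
  assumes cover: "cluster_cover n L G C" and D: "D \<subseteq> C" "2 \<le> card D"
    and new: "cluster n L G S F" "\<And>P. P \<in> D \<Longrightarrow> fst P \<subseteq> S" "F \<subseteq> \<Union>(snd ` D)"
  shows "cluster_cover n L G (insert (S, F) (C - D))" and "card (insert (S, F) (C - D)) < card C"
proof -
  have C: "finite C" "\<And>P. P \<in> C \<Longrightarrow> cluster n L G (fst P) (snd P)" "disjoint_family_on snd C"
    "\<And>e. e \<in> G \<Longrightarrow> \<exists>P\<in>C. e \<subseteq> fst P"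
    using cover unfolding cluster_cover_def by auto
  have "disjoint_family_on snd (insert (S, F) (C - D))"
  proof -
    have "snd P \<inter> snd Q = {}" if "P \<in> D" "Q \<in> C - D" for P Q
    proof (rule disjoint_family_onD[OF C(3)])
      show "P \<in> C" "Q \<in> C" "P \<noteq> Q"
        using D(1) that by auto
    qed
    then have "F \<inter> \<Union>(snd ` (C - D)) = {}"
      using new(3) by blast
    then show ?thesis
      using disjoint_family_on_mono[OF Diff_subset C(3)]
      by (cases "(S, F) \<in> C - D") (simp_all add: insert_absorb disjoint_family_on_insert)
  qed
  moreover have "\<exists>P\<in>insert (S, F) (C - D). e \<subseteq> fst P" if e: "e \<in> G" for e
  proof -
    obtain Q where Q: "Q \<in> C" "e \<subseteq> fst Q"
      using C(4)[OF e] by blast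
    show ?thesis
    proof (cases "Q \<in> D")
      case True
      then have "e \<subseteq> S"
        using new(2) Q(2) by blast
      then show ?thesis
        by simp
    qed (use Q in auto)
  qed
  ultimately show "cluster_cover n L G (insert (S, F) (C - D))"
    using C(1,2) new(1) unfolding cluster_cover_def by simp
  have "card (insert (S, F) (C - D)) \<le> Suc (card C - card D)"
    using C(1) D(1) card_insert_le_m1 by (simp add: card_Diff_subset finite_subset card_insert_if)
  then show "card (insert (S, F) (C - D)) < card C"
    using card_mono[OF C(1) D(1)] D(2) by linarith
qed

lemma cluster_Union:
  assumes cover: "cluster_cover n L G C" and D: "D \<subseteq> C" "D \<noteq> {}"
    and deficit: "2 * card (\<Union>(fst ` D)) + 3 * card D \<le> 2 * (\<Sum>P\<in>D. card (fst P)) + 3"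
  defines "S \<equiv> \<Union>(fst ` D)" and "F \<equiv> \<Union>(snd ` D)"
  shows "S \<subseteq> {1..n}" "card S < card D * L" "2 * card S \<le> card (G \<inter> clique_edges S) + 3"
    and "card S < L \<Longrightarrow> cluster n L G S F"
proof -
  have clD: "\<And>P. P \<in> D \<Longrightarrow> cluster n L G (fst P) (snd P)"
    using cover D(1) unfolding cluster_cover_def by blast
  have fin: "finite D" and disj: "disjoint_family_on snd D"
    using cover D(1) unfolding cluster_cover_def by (meson finite_subset disjoint_family_on_mono)+
  note bounds = card_Union_clusters[OF clD fin D(2) disj deficit, folded S_def F_def]
  show S: "S \<subseteq> {1..n}"
    unfolding S_def by (rule UN_least) (use clD in \<open>simp add: cluster_def\<close>)
  show "card S < card D * L"
    using bounds(1) by simp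
  have F: "F \<subseteq> G \<inter> clique_edges S"
    unfolding F_def
  proof (rule UN_least)
    fix P assume "P \<in> D"
    then have "snd P \<subseteq> G \<inter> clique_edges (fst P)" and "fst P \<subseteq> S"
      using clD unfolding S_def cluster_def by auto
    then show "snd P \<subseteq> G \<inter> clique_edges S"
      using clique_edges_mono by blast
  qed
  have finS: "finite S"
    using S finite_atLeastAtMost by (rule finite_subset)
  then have "card F \<le> card (G \<inter> clique_edges S)"
    using F finite_clique_edges by (intro card_mono) auto
  then show "2 * card S \<le> card (G \<inter> clique_edges S) + 3"
    using bounds(2) by linarith
  obtain P where "P \<in> D"
    using D(2) by blast
  have "2 \<le> card (fst P)"
    using clD[OF \<open>P \<in> D\<close>] unfolding cluster_def by simp
  also have "\<dots> \<le> card S"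
    using \<open>P \<in> D\<close> finS unfolding S_def by (intro card_mono) auto
  finally show "cluster n L G S F" if "card S < L"
    using S F that bounds(2) unfolding cluster_def by simp
qed

lemma cluster_cover_linear_triangle_free:
  assumes cover: "cluster_cover n L G C"
    and no_merge: "\<And>D. D \<subseteq> C \<Longrightarrow> 2 \<le> card D \<Longrightarrow> card D \<le> 3 \<Longrightarrow>
      2 * card (\<Union>(fst ` D)) + 3 * card D \<le> 2 * (\<Sum>P\<in>D. card (fst P)) + 3 \<Longrightarrow> False"
  shows "linear_triangle_free (fst ` C)"
  unfolding linear_triangle_free_def
proof (intro conjI ballI allI impI)
  have finite_fst: "finite (fst P)" if "P \<in> C" for P
    using cover that cluster_finite unfolding cluster_cover_def by blast
  {
    fix A B x y
    assume AB: "A \<in> fst ` C" "B \<in> fst ` C" and xy: "x \<noteq> y" "{x, y} \<subseteq> A \<inter> B"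
    show "A = B"
    proof (rule ccontr)
      assume "A \<noteq> B"
      then obtain P Q where PQ: "P \<in> C" "Q \<in> C" "A = fst P" "B = fst Q" "P \<noteq> Q"
        using AB by blast
      have "card {x, y} \<le> card (A \<inter> B)"
        using xy PQ finite_fst by (intro card_mono) auto
      then have "card (A \<union> B) + 2 \<le> card A + card B"
        using card_Un_Int[of A B] PQ finite_fst xy(1) by simp
      then show False
        using no_merge[of "{P, Q}"] PQ by simp
    qed
  next
    fix A B D x y z
    assume ABD: "A \<in> fst ` C" "B \<in> fst ` C" "D \<in> fst ` C"
      and xyz: "distinct [x, y, z]" "x \<in> A \<inter> B" "y \<in> B \<inter> D" "z \<in> A \<inter> D"
    show "A = B \<or> B = D \<or> A = D"
    proof (rule ccontr)
      assume "\<not> ?thesis"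
      then obtain P Q R where PQR: "P \<in> C" "Q \<in> C" "R \<in> C" "A = fst P" "B = fst Q" "D = fst R"
        "P \<noteq> Q" "Q \<noteq> R" "P \<noteq> R"
        using ABD by blast
      have "card (A \<union> B \<union> D) + 3 \<le> card A + card B + card D"
        using card_Un_triangle[OF _ _ _ xyz] PQR finite_fst by simp
      then show False
        using no_merge[of "{P, Q, R}"] PQR by (simp add: Un_assoc)
    qed
  }
qed

lemma linear_triangle_free_cluster_cover_not_percolating:
  assumes cover: "cluster_cover n L G C" and ltf: "linear_triangle_free (fst ` C)"
    and n: "2 \<le> n" "L \<le> n"
  shows "K4_closure n G \<noteq> Kn_edges n"
proof
  assume perc: "K4_closure n G = Kn_edges n"
  have "Kn_edges n \<subseteq> {e. \<exists>A\<in>fst ` C. e \<subseteq> A}"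
    unfolding perc[symmetric]
  proof (rule K4_closure_subset)
    show "G \<subseteq> {e. \<exists>A\<in>fst ` C. e \<subseteq> A}"
      using cover unfolding cluster_cover_def by auto
    show "f \<in> {e. \<exists>A\<in>fst ` C. e \<subseteq> A}"
      if "card S = 4" "f \<in> clique_edges S" "clique_edges S - {f} \<subseteq> {e. \<exists>A\<in>fst ` C. e \<subseteq> A}" for S f
      using linear_triangle_free_K4[OF ltf that(1,2)] that(3) by blast
  qed
  then have "\<And>e. e \<in> clique_edges {1..n} \<Longrightarrow> \<exists>A\<in>fst ` C. e \<subseteq> A"
    unfolding Kn_edges_eq_clique_edges by blast
  then have "\<exists>A\<in>fst ` C. {1..n} \<subseteq> A"
    using linear_triangle_free_clique[OF ltf, of 1 "{1..n}" 2] n by simp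
  then obtain P where P: "P \<in> C" "{1..n} \<subseteq> fst P"
    by blast
  then have "cluster n L G (fst P) (snd P)"
    using cover unfolding cluster_cover_def by blast
  then have "card (fst P) < L" "finite (fst P)"
    using cluster_finite unfolding cluster_def by blast+
  then show False
    using n(2) card_mono[OF _ P(2)] by simp
qed

lemma percolating_graph_has_dense_set:
  assumes G: "G \<subseteq> Kn_edges n" and perc: "K4_closure n G = Kn_edges n" and L: "3 \<le> L" "L \<le> n"
  shows "\<exists>S\<subseteq>{1..n}. L \<le> card S \<and> card S < 3 * L \<and> 2 * card S \<le> card (G \<inter> clique_edges S) + 3"
proof (rule ccontr)
  assume no_dense: "\<not> ?thesis"
  obtain C where cover: "cluster_cover n L G C"
    and minimal: "\<And>C'. cluster_cover n L G C' \<Longrightarrow> card C \<le> card C'"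
    using ex_has_least_nat[of "cluster_cover n L G" _ card] cluster_cover_edges[OF G L(1)] by metis
  have "linear_triangle_free (fst ` C)"
  proof (rule cluster_cover_linear_triangle_free[OF cover])
    fix D assume D: "D \<subseteq> C" "2 \<le> card D" "card D \<le> 3"
      "2 * card (\<Union>(fst ` D)) + 3 * card D \<le> 2 * (\<Sum>P\<in>D. card (fst P)) + 3"
    have "D \<noteq> {}"
      using D(2) by auto
    note merge = cluster_Union[OF cover D(1) this D(4)]
    show False
    proof (cases "card (\<Union>(fst ` D)) < L")
      case True
      let ?C' = "insert (\<Union>(fst ` D), \<Union>(snd ` D)) (C - D)"
      have "cluster_cover n L G ?C'" "card ?C' < card C"
        by (rule cluster_cover_replace[OF cover D(1,2) merge(4)[OF True]]; blast)+
      then show False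
        using minimal by (meson not_le)
    next
      case False
      have "card (\<Union>(fst ` D)) < 3 * L"
        using merge(2) D(3) by (meson less_le_trans mult_le_mono1)
      then show False
        using merge(1,3) False no_dense by auto
    qed
  qed
  then show False
    using linear_triangle_free_cluster_cover_not_percolating[OF cover] L perc by simp
qed

section \<open>First moment bound in G(n,p)\<close>

lemma gnp_prob_nonneg: "0 \<le> p \<Longrightarrow> p \<le> 1 \<Longrightarrow> 0 \<le> gnp_prob n p P"
  unfolding gnp_prob_def by (intro sum_nonneg) simp

lemma gnp_prob_altdef:
  "gnp_prob n p P =
    (\<Sum>G\<in>Pow (Kn_edges n). if P G then p ^ card G * (1 - p) ^ (card (Kn_edges n) - card G) else 0)"
proof -
  have "{G. G \<subseteq> Kn_edges n \<and> P G} = {G \<in> Pow (Kn_edges n). P G}"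
    by auto
  then show ?thesis
    unfolding gnp_prob_def
    using sum.inter_filter[of "Pow (Kn_edges n)" "\<lambda>G. p ^ card G * (1 - p) ^ (card (Kn_edges n) - card G)" P]
      finite_Kn_edges
    by simp
qed

lemma gnp_prob_union_bound:
  assumes p: "0 \<le> p" "p \<le> 1" and I: "finite I"
    and cover: "\<And>G. G \<subseteq> Kn_edges n \<Longrightarrow> P G \<Longrightarrow> \<exists>i\<in>I. Q i G"
  shows "gnp_prob n p P \<le> (\<Sum>i\<in>I. gnp_prob n p (Q i))"
proof -
  define w :: "nat set set \<Rightarrow> real"
    where "w G = p ^ card G * (1 - p) ^ (card (Kn_edges n) - card G)" for G
  have w: "0 \<le> w G" for G
    using p unfolding w_def by simp
  have "gnp_prob n p P = (\<Sum>G\<in>Pow (Kn_edges n). if P G then w G else 0)"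
    unfolding gnp_prob_altdef w_def ..
  also have "\<dots> \<le> (\<Sum>G\<in>Pow (Kn_edges n). \<Sum>i\<in>I. if Q i G then w G else 0)"
  proof (rule sum_mono)
    fix G assume G: "G \<in> Pow (Kn_edges n)"
    show "(if P G then w G else 0) \<le> (\<Sum>i\<in>I. if Q i G then w G else 0)"
    proof (cases "P G")
      case True
      then obtain i where "i \<in> I" "Q i G"
        using cover G by blast
      then have "(if Q i G then w G else 0) \<le> (\<Sum>i\<in>I. if Q i G then w G else 0)"
        using I w by (intro member_le_sum) auto
      then show ?thesis
        using True \<open>Q i G\<close> by simp
    qed (simp add: w sum_nonneg)
  qed
  also have "\<dots> = (\<Sum>i\<in>I. \<Sum>G\<in>Pow (Kn_edges n). if Q i G then w G else 0)"
    by (rule sum.swap)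
  also have "\<dots> = (\<Sum>i\<in>I. gnp_prob n p (Q i))"
    unfolding gnp_prob_altdef w_def ..
  finally show ?thesis .
qed

lemma sum_Pow_binomial_weights:
  fixes p :: real
  assumes "finite W"
  shows "(\<Sum>H\<in>Pow W. p ^ card H * (1 - p) ^ (card W - card H)) = 1"
proof -
  have "1 = (\<Prod>x\<in>W. p + (1 - p))"
    by simp
  also have "\<dots> = (\<Sum>H\<in>Pow W. (\<Prod>x\<in>H. p) * (\<Prod>x\<in>W - H. 1 - p))"
    by (rule prod_add[OF assms])
  also have "\<dots> = (\<Sum>H\<in>Pow W. p ^ card H * (1 - p) ^ (card W - card H))"
    using assms by (intro sum.cong) (auto simp: card_Diff_subset finite_subset)
  finally show ?thesis ..
qed

lemma gnp_prob_supset: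
  assumes E: "E \<subseteq> Kn_edges n"
  shows "gnp_prob n p (\<lambda>G. E \<subseteq> G) = p ^ card E"
proof -
  define U where "U = Kn_edges n"
  have U: "finite U" "finite E" "E \<subseteq> U"
    using finite_Kn_edges E finite_subset unfolding U_def by auto
  have image: "{G. G \<subseteq> U \<and> E \<subseteq> G} = (\<lambda>H. E \<union> H) ` Pow (U - E)"
    using U(3) by (auto intro!: image_eqI[of _ _ "_ - E"])
  have inj: "inj_on (\<lambda>H. E \<union> H) (Pow (U - E))"
    by (rule inj_onI) blast
  have card_U: "card U = card E + card (U - E)"
    using U by (simp add: card_Diff_subset card_mono)
  have "gnp_prob n p (\<lambda>G. E \<subseteq> G)
      = (\<Sum>H\<in>Pow (U - E). p ^ card (E \<union> H) * (1 - p) ^ (card U - card (E \<union> H)))"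
    unfolding gnp_prob_def U_def[symmetric] image sum.reindex[OF inj] comp_def ..
  also have "\<dots> = (\<Sum>H\<in>Pow (U - E). p ^ card E * (p ^ card H * (1 - p) ^ (card (U - E) - card H)))"
  proof (rule sum.cong)
    fix H assume H: "H \<in> Pow (U - E)"
    then have "card (E \<union> H) = card E + card H"
      using U by (intro card_Un_disjoint) (auto intro: finite_subset)
    then show "p ^ card (E \<union> H) * (1 - p) ^ (card U - card (E \<union> H))
        = p ^ card E * (p ^ card H * (1 - p) ^ (card (U - E) - card H))"
      using card_U by (simp add: power_add)
  qed simp
  also have "\<dots> = p ^ card E"
    using sum_Pow_binomial_weights[of "U - E" p] U by (simp flip: sum_distrib_left)
  finally show ?thesis .
qed

lemma gnp_prob_card_inter_ge:
  assumes p: "0 \<le> p" "p \<le> 1" and K: "K \<subseteq> Kn_edges n"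
  shows "gnp_prob n p (\<lambda>G. m \<le> card (G \<inter> K)) \<le> real (card K choose m) * p ^ m"
proof -
  have fK: "finite K"
    using K finite_Kn_edges by (rule finite_subset)
  define I where "I = {E. E \<subseteq> K \<and> card E = m}"
  have "finite I"
    using fK unfolding I_def by simp
  then have "gnp_prob n p (\<lambda>G. m \<le> card (G \<inter> K)) \<le> (\<Sum>E\<in>I. gnp_prob n p (\<lambda>G. E \<subseteq> G))"
  proof (rule gnp_prob_union_bound[OF p])
    fix G assume "m \<le> card (G \<inter> K)"
    then obtain E where "E \<subseteq> G \<inter> K" "card E = m"
      by (meson obtain_subset_with_card_n)
    then show "\<exists>E\<in>I. E \<subseteq> G"
      unfolding I_def by auto
  qed
  also have "\<dots> = (\<Sum>E\<in>I. p ^ m)"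
    using gnp_prob_supset K unfolding I_def by (intro sum.cong) auto
  also have "\<dots> = real (card I) * p ^ m"
    by simp
  also have "card I = card K choose m"
    unfolding I_def using n_subsets[OF fK] by simp
  finally show ?thesis .
qed

lemma gnp_prob_percolation_le:
  assumes p: "0 \<le> p" "p \<le> 1" and L: "3 \<le> L" "L \<le> n"
  shows "gnp_prob n p (\<lambda>G. K4_closure n G = Kn_edges n) \<le>
    (\<Sum>v\<in>{L..<3*L}. real (n choose v) * (real ((v choose 2) choose (2*v - 3)) * p ^ (2*v - 3)))"
proof -
  define \<S> where "\<S> = {S. S \<subseteq> {1..n} \<and> L \<le> card S \<and> card S < 3 * L}"
  define q where "q v = real ((v choose 2) choose (2*v - 3)) * p ^ (2*v - 3)" for v
  have fin: "finite \<S>"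
    unfolding \<S>_def by simp
  have "gnp_prob n p (\<lambda>G. K4_closure n G = Kn_edges n)
      \<le> (\<Sum>S\<in>\<S>. gnp_prob n p (\<lambda>G. 2 * card S - 3 \<le> card (G \<inter> clique_edges S)))"
  proof (rule gnp_prob_union_bound[OF p fin])
    fix G assume "G \<subseteq> Kn_edges n" "K4_closure n G = Kn_edges n"
    then obtain S where "S \<subseteq> {1..n}" "L \<le> card S" "card S < 3 * L"
      "2 * card S \<le> card (G \<inter> clique_edges S) + 3"
      using percolating_graph_has_dense_set[OF _ _ L] by blast
    then show "\<exists>S\<in>\<S>. 2 * card S - 3 \<le> card (G \<inter> clique_edges S)"
      unfolding \<S>_def by auto
  qed
  also have "\<dots> \<le> (\<Sum>S\<in>\<S>. q (card S))"
  proof (rule sum_mono)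
    fix S assume "S \<in> \<S>"
    then have S: "S \<subseteq> {1..n}" "finite S"
      unfolding \<S>_def by (auto intro: finite_subset)
    have "clique_edges S \<subseteq> Kn_edges n"
      using S(1) clique_edges_mono unfolding Kn_edges_eq_clique_edges by blast
    from gnp_prob_card_inter_ge[OF p this]
    show "gnp_prob n p (\<lambda>G. 2 * card S - 3 \<le> card (G \<inter> clique_edges S)) \<le> q (card S)"
      unfolding q_def card_clique_edges[OF S(2)] .
  qed
  also have "\<dots> = (\<Sum>v\<in>{L..<3*L}. \<Sum>S\<in>{S \<in> \<S>. card S = v}. q (card S))"
    using sum.group[OF fin finite_atLeastLessThan, of card L "3*L" "\<lambda>S. q (card S)"]
    unfolding \<S>_def by fastforce
  also have "\<dots> = (\<Sum>v\<in>{L..<3*L}. real (n choose v) * q v)"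
  proof (rule sum.cong)
    fix v assume "v \<in> {L..<3*L}"
    then have "{S \<in> \<S>. card S = v} = {S. S \<subseteq> {1..n} \<and> card S = v}"
      unfolding \<S>_def by auto
    then show "(\<Sum>S\<in>{S \<in> \<S>. card S = v}. q (card S)) = real (n choose v) * q v"
      using n_subsets[of "{1..n}" v] by simp
  qed simp
  finally show ?thesis
    unfolding q_def .
qed

section \<open>Estimates\<close>

lemma sum_power_div_fact_le_exp:
  fixes x :: real
  assumes "0 \<le> x" "finite I"
  shows "(\<Sum>n\<in>I. x ^ n / fact n) \<le> exp x"
proof -
  have "(\<lambda>n. x ^ n / fact n) sums exp x"
    using exp_converges[of x] by (simp add: divide_inverse mult.commute)
  then show ?thesis
    using assms sum_le_suminf[of "\<lambda>n. x ^ n / fact n" I] by (simp add: sums_iff)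
qed

lemma e_ge_2_7: "27/10 \<le> exp (1::real)"
  using sum_power_div_fact_le_exp[of 1 "{..<6}"]
  by (simp add: lessThan_nat_numeral fact_numeral)

lemma pow_div_exp_le_fact: "(real k / exp 1) ^ k \<le> fact k"
proof -
  have "real k ^ k / fact k \<le> exp (real k)"
    using sum_power_div_fact_le_exp[of "real k" "{k}"] by simp
  also have "\<dots> = exp 1 ^ k"
    using exp_of_nat_mult[of k 1] by simp
  finally show ?thesis
    by (simp add: power_divide divide_le_eq mult.commute)
qed

lemma binomial_le_exp_bound:
  assumes "1 \<le> k"
  shows "real (N choose k) \<le> (exp 1 * real N / real k) ^ k"
proof -
  have "real (N choose k) * fact k \<le> real N ^ k"
    using binomial_fact_pow[of N k] by (metis of_nat_fact of_nat_le_iff of_nat_mult of_nat_power)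
  then have "real (N choose k) \<le> real N ^ k / fact k"
    by (simp add: field_simps)
  also have "\<dots> \<le> real N ^ k / (real k / exp 1) ^ k"
    using pow_div_exp_le_fact[of k] assms by (intro divide_left_mono) auto
  also have "\<dots> = (exp 1 * real N / real k) ^ k"
    by (simp add: power_divide power_mult_distrib)
  finally show ?thesis .
qed

lemma real_choose_two: "real (v choose 2) = real v * (real v - 1) / 2"
  by (induction v) (simp_all add: numeral_2_eq_2 field_simps)

lemma choose_choose_two_le:
  assumes "2 \<le> v"
  shows "real ((v choose 2) choose (2*v - 3)) \<le> exp 1 * (exp 1 * real v / 4) ^ (2*v - 3)"
proof -
  define m where "m = 2*v - 3"
  have m: "1 \<le> m" "real m = 2 * real v - 3"
    using assms unfolding m_def by (simp_all add: of_nat_diff)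
  have v: "2 * real v - 3 \<noteq> 0"
    using assms by linarith
  have "real ((v choose 2) choose m) \<le> (exp 1 * real (v choose 2) / real m) ^ m"
    using binomial_le_exp_bound m(1) by blast
  also have "exp 1 * real (v choose 2) / real m = (exp 1 * real v / 4) * (1 + 1 / real m)"
    using v unfolding m(2) by (simp add: real_choose_two field_simps)
  also have "((exp 1 * real v / 4) * (1 + 1 / real m)) ^ m
      = (exp 1 * real v / 4) ^ m * (1 + 1 / real m) ^ m"
    by (rule power_mult_distrib)
  also have "\<dots> \<le> (exp 1 * real v / 4) ^ m * exp 1"
    using exp_ge_one_plus_x_over_n_power_n[of m 1] m(1) by (intro mult_left_mono) auto
  finally show ?thesis unfolding m_def by (simp add: mult.commute)
qed

lemma percolation_summand_le:
  fixes n v :: nat and p :: real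
  assumes v: "3 \<le> v" and l: "0 < ln (real n)" and p: "0 \<le> p" "p \<le> 1"
    and pn: "p^2 * real n * ln (real n) \<le> 16 / exp 5"
  shows "real (n choose v) * (real ((v choose 2) choose (2*v - 3)) * p ^ (2*v - 3))
    \<le> exp 8 * real n ^ 2 * ln (real n) ^ 2 * (real v / (exp 2 * ln (real n))) ^ v"
proof -
  define E where "E = exp (1::real)"
  define N where "N = real n"
  define l where "l = ln (real n)"
  define x where "x = real v"
  define X where "X = x^2 / (E^3 * N * l)"
  define Y where "Y = x / (E^2 * l)"
  obtain k where k: "v = k + 2" "2*v - 3 = 2*k + 1" using v by (intro that[of "v - 2"]) auto
  have pos: "0 < E" "0 < N" "0 < l" "3 \<le> x"
    using v l by (auto simp: E_def N_def l_def x_def intro: Nat.gr0I)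
  have exp_nat: "exp (real j) = E ^ j" for j using exp_of_nat_mult[of j 1] by (simp add: E_def)
  have "(E * x * p / 4)^2 = (E * x / 4)^2 * p^2" by (simp add: power2_eq_square)
  also have "\<dots> \<le> (E * x / 4)^2 * (16 / (E^5 * N * l))"
    using pn pos exp_nat[of 5] by (intro mult_left_mono) (simp_all add: N_def l_def field_simps)
  also have "\<dots> = X" using pos by (simp add: X_def field_simps power2_eq_square power_numeral_reduce)
  finally have p2: "(E * x * p / 4)^2 \<le> X" .
  have "real ((v choose 2) choose (2*v - 3)) * p ^ (2*v - 3) \<le> E * (E * x / 4) ^ (2*k + 1) * p ^ (2*k + 1)"
    using choose_choose_two_le[of v] v p unfolding k(2)[symmetric] E_def x_def
    by (intro mult_right_mono) auto
  also have "\<dots> = E * (E * x * p / 4) * ((E * x * p / 4)^2) ^ k"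
    by (simp add: power_mult_distrib[symmetric] power_mult[symmetric] mult_ac)
  also have "\<dots> \<le> E * (E * x / 4) * X ^ k"
    using pos p p2 by (intro mult_mono power_mono) (auto simp: mult_left_le)
  finally have edges: "real ((v choose 2) choose (2*v - 3)) * p ^ (2*v - 3) \<le> E * (E * x / 4) * X ^ k" .
  have vertices: "real (n choose v) \<le> (E * N / x) ^ v"
    using binomial_le_exp_bound[of v n] v unfolding E_def N_def x_def by simp
  have "real (n choose v) * (real ((v choose 2) choose (2*v - 3)) * p ^ (2*v - 3))
      \<le> (E * N / x) ^ v * (E * (E * x / 4) * X ^ k)"
    using vertices edges pos p by (intro mult_mono[OF vertices edges]) auto
  also have "\<dots> = E^8 * N^2 * l^2 / (4 * x^3) * Y ^ v"
    using pos unfolding k(1) X_def Y_def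
    by (simp add: field_simps power_mult_distrib power_add power2_eq_square power_numeral_reduce)
  also have "\<dots> \<le> E^8 * N^2 * l^2 * Y ^ v"
  proof (rule mult_right_mono)
    have "1 \<le> 4 * x ^ 3" using one_le_power[of x 3] pos by linarith
    then show "E^8 * N^2 * l^2 / (4 * x^3) \<le> E^8 * N^2 * l^2"
      using mult_left_le[of "1 / (4 * x^3)" "E^8 * N^2 * l^2"] pos by (simp add: divide_le_eq_1)
  qed (use pos in \<open>simp add: Y_def\<close>)
  finally show ?thesis
    using exp_nat[of 8] exp_nat[of 2] by (simp add: E_def N_def l_def x_def Y_def)
qed
lemma quadratic_nonpos_between:
  fixes A B x b c :: real
  assumes "A \<le> x" "x \<le> B" "A < B" "A^2 + b*A + c \<le> 0" "B^2 + b*B + c \<le> 0"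
  shows "x^2 + b*x + c \<le> 0"
proof -
  have "(B - A) * (x^2 + b*x + c)
      = (B - A) * ((x - A) * (x - B)) + (B - x) * (A^2 + b*A + c) + (x - A) * (B^2 + b*B + c)"
    by algebra
  also have "\<dots> \<le> 0"
  proof -
    have "(B - A) * ((x - A) * (x - B)) \<le> 0"
      using assms by (intro mult_nonneg_nonpos mult_nonneg_nonpos) auto
    moreover have "(B - x) * (A^2 + b*A + c) \<le> 0" "(x - A) * (B^2 + b*B + c) \<le> 0"
      using assms by (intro mult_nonneg_nonpos; simp)+
    ultimately show ?thesis
      by linarith
  qed
  finally show ?thesis
    using assms(3) by (simp add: mult_le_0_iff)
qed

text \<open>
  By ln y \<le> y - 1 the left-hand side is at most exp (v (v / (e l) - 2)); the exponent is a convex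
  quadratic in v which stays below -201/100 l at both ends of the range of v.
\<close>

lemma ratio_power_le_exp:
  fixes l :: real and v :: nat
  assumes l: "200 \<le> l" and v: "27/20 * l \<le> real v" "real v \<le> 81/20 * l + 2"
  shows "(real v / (exp 2 * l)) ^ v \<le> exp (- (201/100) * l)"
proof -
  define E where "E = exp (1::real)"
  define x where "x = real v"
  have E: "27/10 \<le> E"
    using e_ge_2_7 unfolding E_def .
  have pos: "0 < E" "0 < l" "0 < x"
    using E l v unfolding x_def by linarith+
  have quadratic: "x^2 + (-2 * E * l) * x + 201/100 * E * l^2 \<le> 0"
  proof (rule quadratic_nonpos_between[of "27/20 * l" x "81/20 * l + 2"])
    show "27/20 * l \<le> x" "x \<le> 81/20 * l + 2" "27/20 * l < 81/20 * l + 2"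
      using v pos unfolding x_def by auto
    have "(27/20 * l)^2 + (-2 * E * l) * (27/20 * l) + 201/100 * E * l^2 = l^2 * (729/400 - E * 69/100)"
      by (simp add: algebra_simps power2_eq_square)
    also have "\<dots> \<le> 0"
      using E by (intro mult_nonneg_nonpos) auto
    finally show "(27/20 * l)^2 + (-2 * E * l) * (27/20 * l) + 201/100 * E * l^2 \<le> 0" .
    have "(81/20 * l + 2)^2 + (-2 * E * l) * (81/20 * l + 2) + 201/100 * E * l^2
        = (6561/400 * l^2 + 81/5 * l + 4) - E * (609/100 * l^2 + 4 * l)"
      by (simp add: algebra_simps power2_eq_square)
    also have "\<dots> \<le> (6561/400 * l^2 + 81/5 * l + 4) - 27/10 * (609/100 * l^2 + 4 * l)"
      using E pos by (intro diff_left_mono mult_right_mono) auto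
    also have "\<dots> = l * (27/5 - 81/2000 * l) + 4"
      by (simp add: algebra_simps power2_eq_square)
    also have "\<dots> \<le> l * (-27/10) + 4"
      using l pos by (intro add_right_mono mult_left_mono) auto
    also have "\<dots> \<le> 0"
      using l by simp
    finally show "(81/20 * l + 2)^2 + (-2 * E * l) * (81/20 * l + 2) + 201/100 * E * l^2 \<le> 0" .
  qed
  have "ln (x / (exp 2 * l)) = ln (x / (E * l)) - 1"
    using pos by (simp add: E_def ln_div ln_mult)
  also have "\<dots> \<le> x / (E * l) - 2"
    using pos ln_le_minus_one[of "x / (E * l)"] by simp
  finally have ln_ratio: "ln (x / (exp 2 * l)) \<le> x / (E * l) - 2" .
  have "x * (x / (E * l) - 2) = - (201/100) * l + (x^2 + (-2 * E * l) * x + 201/100 * E * l^2) / (E * l)"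
    using pos by (simp add: field_simps power2_eq_square)
  also have "\<dots> \<le> - (201/100) * l"
    using quadratic pos by (simp add: divide_nonpos_pos)
  finally have exponent: "x * (x / (E * l) - 2) \<le> - (201/100) * l" .
  have "(x / (exp 2 * l)) ^ v = exp (x * ln (x / (exp 2 * l)))"
    using pos by (simp add: x_def exp_of_nat_mult)
  also have "\<dots> \<le> exp (x * (x / (E * l) - 2))"
    using ln_ratio pos by (simp add: mult_left_mono)
  also have "\<dots> \<le> exp (- (201/100) * l)"
    using exponent by simp
  finally show ?thesis
    unfolding x_def .
qed

lemma gnp_prob_percolation_le_explicit:
  fixes n :: nat and p :: real
  assumes p: "0 \<le> p" "p \<le> 1" and pn: "p^2 * real n * ln (real n) \<le> 16 / exp 5"
    and l: "200 \<le> ln (real n)" and n: "27/20 * ln (real n) + 1 \<le> real n"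
  shows "gnp_prob n p (\<lambda>G. K4_closure n G = Kn_edges n)
     \<le> 2 * (27/20 * ln (real n) + 1) * exp 8 * (ln (real n))^2 * exp (- (1/100) * ln (real n))"
proof -
  define l where "l = ln (real n)"
  define L where "L = nat \<lceil>27/20 * l\<rceil>"
  have L: "27/20 * l \<le> real L" "real L \<le> 27/20 * l + 1" "3 \<le> L" "L \<le> n"
    using l n unfolding L_def l_def by linarith+
  define c where "c = exp 8 * real n ^ 2 * l ^ 2 * exp (- (201/100) * l)"
  have "gnp_prob n p (\<lambda>G. K4_closure n G = Kn_edges n) \<le>
    (\<Sum>v\<in>{L..<3*L}. real (n choose v) * (real ((v choose 2) choose (2*v - 3)) * p ^ (2*v - 3)))"
    by (rule gnp_prob_percolation_le[OF p L(3,4)])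
  also have "\<dots> \<le> (\<Sum>v\<in>{L..<3*L}. c)"
  proof (rule sum_mono)
    fix v assume v: "v \<in> {L..<3*L}"
    have "real (n choose v) * (real ((v choose 2) choose (2*v - 3)) * p ^ (2*v - 3))
        \<le> exp 8 * real n ^ 2 * l ^ 2 * (real v / (exp 2 * l)) ^ v"
      using percolation_summand_le[OF _ _ p pn] v L(3) l unfolding l_def by simp
    also have "\<dots> \<le> c"
      unfolding c_def using ratio_power_le_exp[of l v] v L(1,2) l
      by (intro mult_left_mono) (auto simp: l_def)
    finally show "real (n choose v) * (real ((v choose 2) choose (2*v - 3)) * p ^ (2*v - 3)) \<le> c" .
  qed
  also have "\<dots> = real (2 * L) * c"
    by simp
  also have "\<dots> \<le> 2 * (27/20 * l + 1) * c"
    using L(2) by (intro mult_right_mono) (auto simp: c_def)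
  also have "c = exp 8 * l^2 * exp (- (1/100) * l)"
  proof -
    have "0 < real n"
      using l by (cases n) auto
    then have "real n ^ 2 = exp (2 * l)"
      unfolding l_def by (simp add: exp_of_nat_mult[of 2, simplified])
    then show ?thesis
      unfolding c_def by (simp add: mult_ac flip: exp_add)
  qed
  finally show ?thesis
    unfolding l_def by (simp add: mult_ac)
qed

theorem proposition4p5:
  fixes p :: "nat \<Rightarrow> real"
  assumes "\<And>n. 0 \<le> p n \<and> p n \<le> 1"
    and "\<And>n. (p n)^2 * real n * ln (real n) \<le> 16 / exp 5"
  shows "(\<lambda>n. gnp_prob n (p n) (\<lambda>G. K4_closure n G = Kn_edges n)) \<longlonglongrightarrow> 0"
proof (rule tendsto_sandwich[of "\<lambda>_. 0" _ _
      "\<lambda>n. 2 * (27/20 * ln (real n) + 1) * exp 8 * (ln (real n))^2 * exp (- (1/100) * ln (real n))"])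
  show "\<forall>\<^sub>F n in sequentially. 0 \<le> gnp_prob n (p n) (\<lambda>G. K4_closure n G = Kn_edges n)"
    using assms(1) gnp_prob_nonneg by simp
  have "\<forall>\<^sub>F n in sequentially. 200 \<le> ln (real n)" "\<forall>\<^sub>F n in sequentially. 27/20 * ln (real n) + 1 \<le> real n"
    by real_asymp+
  then show "\<forall>\<^sub>F n in sequentially. gnp_prob n (p n) (\<lambda>G. K4_closure n G = Kn_edges n)
      \<le> 2 * (27/20 * ln (real n) + 1) * exp 8 * (ln (real n))^2 * exp (- (1/100) * ln (real n))"
    by eventually_elim (use gnp_prob_percolation_le_explicit assms in blast)
  show "(\<lambda>n. 2 * (27/20 * ln (real n) + 1) * exp 8 * (ln (real n))^2 * exp (- (1/100) * ln (real n)))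
      \<longlonglongrightarrow> 0"
    by real_asymp
qed (simp)

end
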